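(* Let $\mathbf{p}_0,\ldots,\mathbf{p}_d\in\mathbb{R}^d$ be $d+1$ points not contained in any $(d-1)$-dimensional affine subspace, let $\lambda_0,\ldots,\lambda_d\in(0,1)$, and let $S_i(\mathbf{x})=\lambda_i\mathbf{x}+(1-\lambda_i)\mathbf{p}_i$ for $i=0,\ldots,d$. If $\sum_{i=0}^d\lambda_i\ge d$, then the unique non-empty compact set $X$ with $X=\bigcup_{i=0}^dS_i(X)$ equals the convex hull $\mathrm{conv}(\{\mathbf{p}_0,\ldots,\mathbf{p}_d\})$. *)

theory Defs
  imports "HOL-Analysis.Analysis"
begin

end

theory Submission
  imports Defs
begin

text \<open>
  A nonempty compact set covered by its images under contractions \<open>S\<^sub>i\<close> lies in every
  nonempty closed set \<open>B\<close> that the \<open>S\<^sub>i\<close> map into itself: if \<open>a = S\<^sub>i a'\<close> maximizes the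
  distance to \<open>B\<close>, then \<open>dist a B \<le> k\<^sub>i dist a' B \<le> k\<^sub>i dist a B\<close> with \<open>k\<^sub>i < 1\<close>. Hence there
  is at most one self-similar compact set, and it remains to see that the convex hull \<open>C\<close> is
  self-similar. Each \<open>S\<^sub>i\<close> maps \<open>C\<close> into \<open>C\<close> by convexity. Conversely, if \<open>c = \<Sum> m\<^sub>j p\<^sub>j\<close> in
  barycentric coordinates, then \<open>\<Sum> (1 - \<lambda>\<^sub>j) \<le> 1 = \<Sum> m\<^sub>j\<close>, so \<open>m\<^sub>i \<ge> 1 - \<lambda>\<^sub>i\<close> for some \<open>i\<close>;
  removing \<open>(1 - \<lambda>\<^sub>i) p\<^sub>i\<close> from \<open>c\<close> and rescaling by \<open>1/\<lambda>\<^sub>i\<close> leaves nonnegative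
  coordinates, i.e. a point \<open>c' \<in> C\<close> with \<open>c = S\<^sub>i c'\<close>. Affine independence of the \<open>p\<^sub>i\<close> is
  only used to make them distinct, so that barycentric coordinates can be indexed by \<open>i\<close>.
\<close>

definition homothety :: "real \<Rightarrow> 'a \<Rightarrow> 'a \<Rightarrow> 'a::real_vector"
  where "homothety r c x = r *\<^sub>R x + (1 - r) *\<^sub>R c"

lemma lipschitz_on_homothety:
  fixes c :: "'a::real_normed_vector"
  assumes "0 \<le> r"
  shows "r-lipschitz_on U (homothety r c)"
proof (rule lipschitz_onI)
  fix x y
  have "dist (homothety r c x) (homothety r c y) = norm (r *\<^sub>R (x - y))"
    unfolding dist_norm homothety_def by (simp add: algebra_simps)
  also have "\<dots> = r * dist x y"
    using assms by (simp add: dist_norm)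
  finally show "dist (homothety r c x) (homothety r c y) \<le> r * dist x y"
    by simp
qed (fact assms)

lemma homothety_in_convex:
  assumes "convex S" "c \<in> S" "x \<in> S" "0 \<le> r" "r \<le> 1"
  shows "homothety r c x \<in> S"
  unfolding homothety_def by (rule convexD[OF assms(1,3,2)]) (use assms in auto)

lemma compact_self_covered_subset_invariant:
  fixes A B :: "'a::heine_borel set" and T :: "'i \<Rightarrow> 'a \<Rightarrow> 'a"
  assumes "compact A" and B: "closed B" "B \<noteq> {}"
    and cover: "A \<subseteq> (\<Union>i\<in>I. T i ` A)"
    and invariant: "\<And>i. i \<in> I \<Longrightarrow> T i ` B \<subseteq> B"
    and lipschitz: "\<And>i. i \<in> I \<Longrightarrow> (k i)-lipschitz_on UNIV (T i)"
    and contraction: "\<And>i. i \<in> I \<Longrightarrow> k i < 1"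
  shows "A \<subseteq> B"
proof
  fix x assume "x \<in> A"
  have "continuous_on A (\<lambda>y. infdist y B)"
    by (intro continuous_intros)
  then obtain a where "a \<in> A" and a_max: "\<And>y. y \<in> A \<Longrightarrow> infdist y B \<le> infdist a B"
    using continuous_attains_sup[OF \<open>compact A\<close>] \<open>x \<in> A\<close> by blast
  then obtain i a' where i: "i \<in> I" "a' \<in> A" "a = T i a'"
    using cover by blast
  obtain b where "b \<in> B" and b: "infdist a' B = dist a' b"
    using infdist_attains_inf[OF B] by blast
  have "infdist a B \<le> dist (T i a') (T i b)"
    using i \<open>b \<in> B\<close> invariant infdist_le by blast
  also have "\<dots> \<le> k i * infdist a' B"
    using lipschitz_onD[OF lipschitz[OF \<open>i \<in> I\<close>]] b by simp
  also have "\<dots> \<le> k i * infdist a B"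
    using a_max[OF \<open>a' \<in> A\<close>] lipschitz_on_nonneg[OF lipschitz[OF \<open>i \<in> I\<close>]]
    by (rule mult_left_mono)
  finally have "infdist a B = 0"
    using contraction[OF \<open>i \<in> I\<close>] infdist_nonneg[of a B]
      mult_le_cancel_right1[of "infdist a B" "k i"] by auto
  then have "infdist x B = 0"
    using a_max[OF \<open>x \<in> A\<close>] infdist_nonneg[of x B] by linarith
  then show "x \<in> B"
    using in_closed_iff_infdist_zero[OF B] by blast
qed

lemma self_similar_compact_unique:
  fixes A B :: "'a::heine_borel set" and T :: "'i \<Rightarrow> 'a \<Rightarrow> 'a"
  assumes A: "compact A" "A \<noteq> {}" "A = (\<Union>i\<in>I. T i ` A)"
    and B: "compact B" "B \<noteq> {}" "B = (\<Union>i\<in>I. T i ` B)"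
    and lipschitz: "\<And>i. i \<in> I \<Longrightarrow> (k i)-lipschitz_on UNIV (T i)"
    and contraction: "\<And>i. i \<in> I \<Longrightarrow> k i < 1"
  shows "A = B"
proof
  have invariant: "T i ` A \<subseteq> A" "T i ` B \<subseteq> B" if "i \<in> I" for i
    using that A(3) B(3) by blast+
  show "A \<subseteq> B"
    by (rule compact_self_covered_subset_invariant[OF A(1) compact_imp_closed[OF B(1)] B(2)
          equalityD1[OF A(3)] invariant(2) lipschitz contraction])
  show "B \<subseteq> A"
    by (rule compact_self_covered_subset_invariant[OF B(1) compact_imp_closed[OF A(1)] A(2)
          equalityD1[OF B(3)] invariant(1) lipschitz contraction])
qed

lemma convex_hull_inj_imageE:
  assumes "finite I" "inj_on p I" "c \<in> convex hull (p ` I)"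
  obtains m where "\<And>j. j \<in> I \<Longrightarrow> 0 \<le> m j" "sum m I = 1" "(\<Sum>j\<in>I. m j *\<^sub>R p j) = c"
proof -
  obtain u where "\<forall>x\<in>p ` I. 0 \<le> u x" "sum u (p ` I) = 1" "(\<Sum>x\<in>p ` I. u x *\<^sub>R x) = c"
    using assms by (auto simp: convex_hull_finite)
  with \<open>inj_on p I\<close> show thesis
    by (intro that[of "u \<circ> p"]) (auto simp: sum.reindex)
qed

lemma convex_hull_subset_Union_homothety:
  fixes p :: "'i \<Rightarrow> 'a::real_vector"
  assumes "finite I" "inj_on p I"
    and lam_pos: "\<And>i. i \<in> I \<Longrightarrow> 0 < lam i"
    and lam_sum: "(\<Sum>i\<in>I. 1 - lam i) \<le> 1"
  shows "convex hull (p ` I) \<subseteq> (\<Union>i\<in>I. homothety (lam i) (p i) ` (convex hull (p ` I)))"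
proof
  fix c assume "c \<in> convex hull (p ` I)"
  then obtain m where m_nonneg: "\<And>j. j \<in> I \<Longrightarrow> 0 \<le> m j"
    and m_sum: "sum m I = 1" and m_comb: "(\<Sum>j\<in>I. m j *\<^sub>R p j) = c"
    using convex_hull_inj_imageE[OF \<open>finite I\<close> \<open>inj_on p I\<close>] by blast
  have "\<exists>i\<in>I. 1 - lam i \<le> m i"
  proof (rule ccontr)
    assume "\<not> ?thesis"
    then have "sum m I < (\<Sum>i\<in>I. 1 - lam i)"
      using m_sum \<open>finite I\<close> by (intro sum_strict_mono) auto
    with m_sum lam_sum show False by linarith
  qed
  then obtain i where "i \<in> I" and m_i: "1 - lam i \<le> m i" ..
  have lam_i: "0 < lam i"
    using lam_pos[OF \<open>i \<in> I\<close>] .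
  define w where "w j = m j - (if j = i then 1 - lam i else 0)" for j
  define c' where "c' = (\<Sum>j\<in>I. (w j / lam i) *\<^sub>R p j)"
  have "(\<Sum>j\<in>I. w j) = lam i"
    using m_sum \<open>i \<in> I\<close> \<open>finite I\<close> by (simp add: w_def sum_subtractf)
  then have "c' \<in> convex hull (p ` I)"
    unfolding c'_def using m_nonneg m_i lam_i \<open>finite I\<close>
    by (intro convex_sum convex_convex_hull)
       (auto simp: w_def hull_inc sum_divide_distrib[symmetric])
  moreover have "lam i *\<^sub>R c' = c - (1 - lam i) *\<^sub>R p i"
    using lam_i \<open>i \<in> I\<close> \<open>finite I\<close>
    by (simp add: c'_def w_def scaleR_sum_right scaleR_diff_left sum_subtractf m_comb
        if_distrib[of "\<lambda>a. a *\<^sub>R _"] cong: if_cong)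
  then have "c = homothety (lam i) (p i) c'"
    by (simp add: homothety_def)
  ultimately show "c \<in> (\<Union>i\<in>I. homothety (lam i) (p i) ` (convex hull (p ` I)))"
    using \<open>i \<in> I\<close> by blast
qed

lemma convex_hull_self_similar:
  fixes p :: "'i \<Rightarrow> 'a::real_vector"
  assumes "finite I" "inj_on p I"
    and "\<And>i. i \<in> I \<Longrightarrow> 0 < lam i \<and> lam i \<le> 1"
    and "(\<Sum>i\<in>I. 1 - lam i) \<le> 1"
  shows "convex hull (p ` I) = (\<Union>i\<in>I. homothety (lam i) (p i) ` (convex hull (p ` I)))"
proof
  show "convex hull (p ` I) \<subseteq> (\<Union>i\<in>I. homothety (lam i) (p i) ` (convex hull (p ` I)))"
    using assms by (intro convex_hull_subset_Union_homothety) auto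
  have "homothety (lam i) (p i) x \<in> convex hull (p ` I)"
    if "i \<in> I" "x \<in> convex hull (p ` I)" for i x
    using that assms(3)[OF that(1)]
    by (intro homothety_in_convex) (auto intro: hull_inc)
  then show "(\<Union>i\<in>I. homothety (lam i) (p i) ` (convex hull (p ` I))) \<subseteq> convex hull (p ` I)"
    by blast
qed

theorem self_similar_iff_convex_hull:
  fixes p :: "'i \<Rightarrow> 'a::euclidean_space"
  assumes "finite I" "I \<noteq> {}" "inj_on p I"
    and lam: "\<And>i. i \<in> I \<Longrightarrow> 0 < lam i \<and> lam i < 1"
    and "(\<Sum>i\<in>I. 1 - lam i) \<le> 1"
  shows "X \<noteq> {} \<and> compact X \<and> X = (\<Union>i\<in>I. homothety (lam i) (p i) ` X)
    \<longleftrightarrow> X = convex hull (p ` I)"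
proof -
  let ?C = "convex hull (p ` I)"
  have C: "compact ?C" "?C \<noteq> {}" "?C = (\<Union>i\<in>I. homothety (lam i) (p i) ` ?C)"
    using assms by (simp_all add: finite_imp_compact_convex_hull convex_hull_self_similar less_imp_le)
  have "(lam i)-lipschitz_on UNIV (homothety (lam i) (p i))" "lam i < 1" if "i \<in> I" for i
    using lam[OF that] by (auto intro: lipschitz_on_homothety)
  then have "X = ?C" if "X \<noteq> {}" "compact X" "X = (\<Union>i\<in>I. homothety (lam i) (p i) ` X)"
    by (rule self_similar_compact_unique[OF that(2,1,3) C])
  with C show ?thesis
    by blast
qed

lemma inj_on_if_aff_dim_image:
  fixes p :: "'i \<Rightarrow> 'a::euclidean_space"
  assumes "finite I" "aff_dim (p ` I) = int (card I) - 1"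
  shows "inj_on p I"
proof -
  have "card I \<le> card (p ` I)"
    using aff_dim_le_card[of "p ` I"] assms by simp
  then show ?thesis
    using card_image_le[OF \<open>finite I\<close>, of p] eq_card_imp_inj_on[of I p] \<open>finite I\<close> by simp
qed

theorem lemma2p3:
  fixes p :: "nat \<Rightarrow> real ^ 'n" and lam :: "nat \<Rightarrow> real" and d :: nat
  assumes "d = CARD('n)"
    and "aff_dim (p ` {..d}) = int d"
    and "\<And>i. i \<le> d \<Longrightarrow> 0 < lam i \<and> lam i < 1"
    and "(\<Sum>i\<le>d. lam i) \<ge> real d"
  shows "(\<exists>!X :: (real ^ 'n) set. X \<noteq> {} \<and> compact X \<and>
            X = (\<Union>i\<le>d. (\<lambda>x. lam i *\<^sub>R x + (1 - lam i) *\<^sub>R p i) ` X))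
       \<and> (\<forall>X :: (real ^ 'n) set. X \<noteq> {} \<and> compact X \<and>
            X = (\<Union>i\<le>d. (\<lambda>x. lam i *\<^sub>R x + (1 - lam i) *\<^sub>R p i) ` X)
            \<longrightarrow> X = convex hull (p ` {..d}))"
proof -
  have "inj_on p {..d}"
    using assms(2) by (intro inj_on_if_aff_dim_image) auto
  moreover have "(\<Sum>i\<le>d. 1 - lam i) \<le> 1"
    using assms(4) by (simp add: sum_subtractf)
  ultimately have "X \<noteq> {} \<and> compact X \<and> X = (\<Union>i\<le>d. homothety (lam i) (p i) ` X)
      \<longleftrightarrow> X = convex hull (p ` {..d})" for X
    using assms(3) by (intro self_similar_iff_convex_hull) auto
  then show ?thesis
    unfolding homothety_def by (simp only:) simp
qed

end
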